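(* Let $A\in\mathbb{R}^{n\times n}$, $r\in\{1,\dots,n-1\}$ with $\mathrm{Re}(\lambda_r(A))>\mathrm{Re}(\lambda_{r+1}(A))$, let $P\in\mathbb{R}^{n\times n}$ be a permutation matrix with $Pe_i=e_{\pi(i)}$, and let $\bar U_P=\Psi P\begin{bsmallmatrix}K_r\\ O_{n-r,r}\end{bsmallmatrix}\in\mathrm{St}(r,n)$, with $K_r\in\mathbb{C}^{r\times r}$ invertible, be an equilibrium point of the Oja flow $\frac{dU}{dt}=(I_n-UU^{\top})AU$. Then the eigenvalues (with multiplicity) of $\bar U_P^{\top}A\bar U_P$ are $\lambda_{\pi(1)}(A),\dots,\lambda_{\pi(r)}(A)$.
   Context: $\mathrm{St}(r,n):=\{X\in\mathbb{R}^{n\times r}\mid X^{\top}X=I_r\}$. Eigenvalues of $A$ are ordered as $\mathrm{Re}(\lambda_1(A))\ge\dots\ge\mathrm{Re}(\lambda_n(A))$. $\Psi=[\psi_1,\dots,\psi_n]\in\mathbb{C}^{n\times n}$ is an invertible matrix of unit-norm (generalized) eigenvectors of $A$ for $\lambda_1(A),\dots,\lambda_n(A)$ with $\Psi^{-1}A\Psi$ the Jordan form of $A$. *)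

theory Defs
  imports "Jordan_Normal_Form.Jordan_Normal_Form" "HOL-Combinatorics.Permutations"
begin

(* Permutation matrix P with P e_j = e_{pi j}  (0-indexed) *)
definition perm_mat :: "nat \<Rightarrow> (nat \<Rightarrow> nat) \<Rightarrow> real mat" where
  "perm_mat n \<pi> = mat n n (\<lambda>(i,j). if i = \<pi> j then 1 else 0)"

definition stack_zero :: "nat \<Rightarrow> complex mat \<Rightarrow> complex mat" where
  "stack_zero n K = mat n (dim_col K) (\<lambda>(i,j). if i < dim_row K then K $$ (i,j) else 0)"

definition stiefel :: "nat \<Rightarrow> nat \<Rightarrow> real mat set" where
  "stiefel r n = {X. X \<in> carrier_mat n r \<and> transpose_mat X * X = 1\<^sub>m r}"

definition oja_equilibrium :: "real mat \<Rightarrow> real mat \<Rightarrow> bool" where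
  "oja_equilibrium A U \<longleftrightarrow>
     (1\<^sub>m (dim_row U) - U * transpose_mat U) * A * U = 0\<^sub>m (dim_row U) (dim_col U)"

definition jordan_basis :: "nat \<Rightarrow> real mat \<Rightarrow> complex mat \<Rightarrow> (nat \<times> complex) list \<Rightarrow> bool" where
  "jordan_basis n A \<Psi> n_as \<longleftrightarrow>
     \<Psi> \<in> carrier_mat n n \<and> invertible_mat \<Psi> \<and>
     0 \<notin> fst ` set n_as \<and> sum_list (map fst n_as) = n \<and>
     map_mat complex_of_real A * \<Psi> = \<Psi> * jordan_matrix n_as \<and>
     (\<forall>j<n. (\<Sum>i<n. (cmod (\<Psi> $$ (i,j)))\<^sup>2) = 1)"

(* eigenvalues lambda_0, ..., lambda_{n-1} as they appear on the diagonal of the Jordan form *)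
definition jordan_eig :: "(nat \<times> complex) list \<Rightarrow> nat \<Rightarrow> complex" where
  "jordan_eig n_as i = jordan_matrix n_as $$ (i,i)"

end

theory Submission
  imports Defs
begin

text \<open>At an equilibrium of the Oja flow, \<open>A U = U M\<close> with \<open>M = U\<^sup>T A U\<close>: the columns of \<open>U\<close>
span an \<open>A\<close>-invariant subspace on which \<open>A\<close> acts by \<open>M\<close>. Writing \<open>U = \<Psi> Y\<close> with
\<open>Y = P [K; 0]\<close> and cancelling \<open>\<Psi>\<close> gives \<open>J Y = Y M\<close> for the Jordan form \<open>J\<close>. The rows
\<open>\<pi> 0, \<dots>, \<pi> (r - 1)\<close> of \<open>Y\<close> form \<open>K\<close> and all other rows vanish, so reading off these rows
yields \<open>J\<^sub>\<pi> K = K M\<close> with \<open>J\<^sub>\<pi> = (J\<^bsub>\<pi> a, \<pi> b\<^esub>)\<^bsub>a,b<r\<^esub>\<close>; hence \<open>M\<close> is similar to \<open>J\<^sub>\<pi>\<close>.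
As \<open>J\<close> is upper triangular and \<open>\<pi>\<close> is injective, \<open>J\<^sub>\<pi>\<close> is triangular after a simultaneous
reordering of rows and columns, so its characteristic polynomial is
\<open>\<Prod>i<r. (x - J\<^bsub>\<pi> i, \<pi> i\<^esub>)\<close>.\<close>

lemma permutes_ex_decrease:
  fixes f :: "'a \<Rightarrow> 'b :: linorder"
  assumes p: "p permutes S" and S: "finite S" and f: "inj_on f S" and p_ne: "p \<noteq> id"
  shows "\<exists>a\<in>S. f (p a) < f a"
proof -
  define D where "D = {a. p a \<noteq> a}"
  have D: "D \<subseteq> S" using p unfolding D_def permutes_def by auto
  have "D \<noteq> {}" using p_ne unfolding D_def by auto
  moreover have fin: "finite (f ` D)" using finite_subset[OF D S] by simp
  ultimately obtain a where a: "a \<in> D" "f a = Max (f ` D)"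
    by (metis (mono_tags, lifting) Max_in empty_is_image imageE)
  \<comment> \<open>a moved point of maximal value is mapped to a moved point of smaller value\<close>
  have "p a \<in> D" using a(1) permutes_inj[OF p] unfolding D_def by (auto dest: injD)
  hence "f (p a) \<le> f a" using a(2) fin by simp
  moreover have "f (p a) \<noteq> f a"
    using a(1) D permutes_in_image[OF p] f unfolding D_def by (auto dest: inj_onD)
  ultimately show ?thesis using a(1) D by force
qed

lemma det_reordered_upper_triangular:
  fixes B :: "'a :: comm_ring_1 mat" and f :: "nat \<Rightarrow> 'b :: linorder"
  assumes B: "B \<in> carrier_mat r r" and f: "inj_on f {0..<r}"
    and zero: "\<And>a b. a < r \<Longrightarrow> b < r \<Longrightarrow> f b < f a \<Longrightarrow> B $$ (a,b) = 0"
  shows "det B = (\<Prod>i=0..<r. B $$ (i,i))"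
proof -
  have "det B = (\<Sum>p\<in>{p. p permutes {0..<r}}. signof p * (\<Prod>i=0..<r. B $$ (i, p i)))"
    by (rule det_def'[OF B])
  also have "\<dots> = (\<Sum>p\<in>{id}. signof p * (\<Prod>i=0..<r. B $$ (i, p i)))"
  proof (rule sum.mono_neutral_right)
    show "\<forall>p\<in>{p. p permutes {0..<r}} - {id}. signof p * (\<Prod>i=0..<r. B $$ (i, p i)) = 0"
    proof
      fix p assume "p \<in> {p. p permutes {0..<r}} - {id}"
      hence p: "p permutes {0..<r}" "p \<noteq> id" by auto
      then obtain a where a: "a < r" "f (p a) < f a"
        using permutes_ex_decrease[OF p(1) _ f] by auto
      have "p a < r" using p(1) a(1) by (simp add: permutes_in_image)
      hence "B $$ (a, p a) = 0" using zero a by auto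
      hence "(\<Prod>i=0..<r. B $$ (i, p i)) = 0" using a(1) by (intro prod_zero) auto
      thus "signof p * (\<Prod>i=0..<r. B $$ (i, p i)) = 0" by simp
    qed
  qed (auto simp: finite_permutations)
  also have "\<dots> = (\<Prod>i=0..<r. B $$ (i,i))" by simp
  finally show ?thesis .
qed

lemma obtain_inverse_mat:
  assumes "A \<in> carrier_mat n n" "invertible_mat A"
  obtains B where "B \<in> carrier_mat n n" "A * B = 1\<^sub>m n" "B * A = 1\<^sub>m n"
proof -
  obtain B where B: "A * B = 1\<^sub>m n" "B * A = 1\<^sub>m (dim_row B)"
    using assms unfolding invertible_mat_def inverts_mat_def by auto
  have "dim_col B = n" "dim_row B = n"
    using arg_cong[OF B(1), of dim_col] arg_cong[OF B(2), of dim_col] assms(1) by auto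
  thus ?thesis using that B by auto
qed

lemma invertible_mat_mult_left_cancel:
  assumes \<Psi>: "\<Psi> \<in> carrier_mat n n" "invertible_mat \<Psi>"
    and X: "X \<in> carrier_mat n m" and Y: "Y \<in> carrier_mat n m" and eq: "\<Psi> * X = \<Psi> * Y"
  shows "X = Y"
proof -
  obtain \<Phi> where \<Phi>: "\<Phi> \<in> carrier_mat n n" "\<Phi> * \<Psi> = 1\<^sub>m n"
    using obtain_inverse_mat[OF \<Psi>] by metis
  have "X = \<Phi> * \<Psi> * X" using \<Phi> X by simp
  also have "\<dots> = \<Phi> * (\<Psi> * X)" by (rule assoc_mult_mat[OF \<Phi>(1) \<Psi>(1) X])
  also have "\<dots> = \<Phi> * \<Psi> * Y" unfolding eq by (rule assoc_mult_mat[OF \<Phi>(1) \<Psi>(1) Y, symmetric])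
  also have "\<dots> = Y" using \<Phi> Y by simp
  finally show ?thesis .
qed

lemma intertwining_conj:
  assumes \<Psi>: "\<Psi> \<in> carrier_mat n n" "invertible_mat \<Psi>"
    and A: "A \<in> carrier_mat n n" and J: "J \<in> carrier_mat n n" and AJ: "A * \<Psi> = \<Psi> * J"
    and Y: "Y \<in> carrier_mat n r" and M: "M \<in> carrier_mat r r"
    and AY: "A * (\<Psi> * Y) = (\<Psi> * Y) * M"
  shows "J * Y = Y * M"
proof (rule invertible_mat_mult_left_cancel[OF \<Psi>])
  have "\<Psi> * (J * Y) = A * \<Psi> * Y" using \<Psi> J Y AJ by (simp add: assoc_mult_mat[of _ n n _ n _ r])
  also have "\<dots> = \<Psi> * (Y * M)" using AY A \<Psi> Y M by (simp add: assoc_mult_mat[of _ n n _ _ _ r])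
  finally show "\<Psi> * (J * Y) = \<Psi> * (Y * M)" .
qed (use J Y M in auto)

lemma oja_equilibrium_imp_invariant:
  assumes A: "A \<in> carrier_mat n n" and U: "U \<in> carrier_mat n r" and eq: "oja_equilibrium A U"
  shows "A * U = U * (transpose_mat U * A * U)"
proof -
  have "0\<^sub>m n r = (1\<^sub>m n - U * transpose_mat U) * A * U"
    using eq U unfolding oja_equilibrium_def by auto
  also have "\<dots> = A * U - U * (transpose_mat U * A * U)"
    using U A by (simp add: minus_mult_distrib_mat[of _ n n] assoc_mult_mat[of _ n r _ n])
  finally have zero: "0\<^sub>m n r = A * U - U * (transpose_mat U * A * U)" .
  show ?thesis
  proof (rule eq_matI)
    fix i j assume "i < dim_row (U * (transpose_mat U * A * U))" "j < dim_col (U * (transpose_mat U * A * U))"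
    thus "(A * U) $$ (i,j) = (U * (transpose_mat U * A * U)) $$ (i,j)"
      using arg_cong[OF zero, of "\<lambda>X. X $$ (i,j)"] A U by simp
  qed (use A U in auto)
qed

text \<open>For the permutation matrix \<open>P\<close> of \<open>\<pi>\<close>, this is the leading \<open>r \<times> r\<close> block of \<open>P\<^sup>T J P\<close>.\<close>

definition permuted_block :: "'a mat \<Rightarrow> (nat \<Rightarrow> nat) \<Rightarrow> nat \<Rightarrow> 'a mat" where
  "permuted_block J \<pi> r = mat r r (\<lambda>(a,b). J $$ (\<pi> a, \<pi> b))"

lemma char_poly_permuted_block_upper_triangular:
  fixes J :: "'a :: comm_ring_1 mat"
  assumes J: "J \<in> carrier_mat n n" "upper_triangular J"
    and \<pi>: "inj_on \<pi> {..<r}" "\<pi> ` {..<r} \<subseteq> {..<n}"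
  shows "char_poly (permuted_block J \<pi> r) = (\<Prod>i<r. [:- J $$ (\<pi> i, \<pi> i), 1:])"
proof -
  have "char_poly (permuted_block J \<pi> r) = (\<Prod>i=0..<r. char_poly_matrix (permuted_block J \<pi> r) $$ (i,i))"
    unfolding char_poly_def
  proof (rule det_reordered_upper_triangular)
    show "inj_on \<pi> {0..<r}" using \<pi>(1) by (simp add: lessThan_atLeast0)
    fix a b assume ab: "a < r" "b < r" "\<pi> b < \<pi> a"
    hence "J $$ (\<pi> a, \<pi> b) = 0" using J \<pi>(2) by (intro upper_triangularD[OF J(2)]) auto
    thus "char_poly_matrix (permuted_block J \<pi> r) $$ (a, b) = 0"
      using ab unfolding char_poly_matrix_def permuted_block_def by auto
  qed (simp add: permuted_block_def)
  also have "\<dots> = (\<Prod>i<r. [:- J $$ (\<pi> i, \<pi> i), 1:])"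
    by (simp add: lessThan_atLeast0 char_poly_matrix_def permuted_block_def)
  finally show ?thesis .
qed

lemma perm_mat_stack_zero_entry:
  assumes \<pi>: "\<pi> permutes {..<n}" and K: "K \<in> carrier_mat k m" and k: "k \<le> n"
    and a: "a < n" and c: "c < m"
  shows "(map_mat complex_of_real (perm_mat n \<pi>) * stack_zero n K) $$ (\<pi> a, c)
    = (if a < k then K $$ (a,c) else 0)"
proof -
  let ?P = "map_mat complex_of_real (perm_mat n \<pi>)"
  have \<pi>a: "\<pi> a < n" using permutes_in_image[OF \<pi>, of a] a by simp
  have "(?P * stack_zero n K) $$ (\<pi> a, c) = (\<Sum>i<n. ?P $$ (\<pi> a, i) * stack_zero n K $$ (i, c))"
    using \<pi>a c K by (simp add: perm_mat_def stack_zero_def scalar_prod_def lessThan_atLeast0)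
  also have "\<dots> = (\<Sum>i<n. if i = a then stack_zero n K $$ (i, c) else 0)"
  proof (rule sum.cong)
    fix i assume "i \<in> {..<n}"
    moreover have "\<pi> a = \<pi> i \<longleftrightarrow> a = i" using permutes_inj[OF \<pi>] by (auto dest: injD)
    ultimately show "?P $$ (\<pi> a, i) * stack_zero n K $$ (i, c) = (if i = a then stack_zero n K $$ (i, c) else 0)"
      using \<pi>a unfolding perm_mat_def by auto
  qed simp
  also have "\<dots> = (if a < k then K $$ (a,c) else 0)"
    using a c k K by (simp add: stack_zero_def)
  finally show ?thesis .
qed

lemma perm_stack_zero_intertwining_imp_similar:
  fixes J M K :: "complex mat" and \<pi> :: "nat \<Rightarrow> nat" and n r :: nat
  defines "Y \<equiv> map_mat complex_of_real (perm_mat n \<pi>) * stack_zero n K"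
  assumes J: "J \<in> carrier_mat n n" and M: "M \<in> carrier_mat r r"
    and K: "K \<in> carrier_mat r r" "invertible_mat K"
    and \<pi>: "\<pi> permutes {..<n}" and r: "r \<le> n" and JY: "J * Y = Y * M"
  shows "similar_mat M (permuted_block J \<pi> r)"
proof -
  let ?B = "permuted_block J \<pi> r"
  have Y: "Y \<in> carrier_mat n r" using K unfolding Y_def perm_mat_def stack_zero_def by auto
  have Y_row: "Y $$ (\<pi> b, c) = (if b < r then K $$ (b,c) else 0)" if "b < n" "c < r" for b c
    unfolding Y_def using perm_mat_stack_zero_entry[OF \<pi> K(1) r] that by simp
  have \<pi>_lt: "\<pi> a < n" if "a < n" for a using permutes_in_image[OF \<pi>, of a] that by simp
  have BK: "?B * K = K * M"
  proof (rule eq_matI)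
    fix a c assume "a < dim_row (K * M)" "c < dim_col (K * M)"
    hence a: "a < r" and c: "c < r" using K M by auto
    have "(J * Y) $$ (\<pi> a, c) = (\<Sum>i<n. J $$ (\<pi> a, i) * Y $$ (i, c))"
      using J Y \<pi>_lt a r c by (simp add: scalar_prod_def lessThan_atLeast0)
    also have "\<dots> = (\<Sum>b<n. J $$ (\<pi> a, \<pi> b) * Y $$ (\<pi> b, c))"
      by (rule sum.reindex_bij_betw[OF permutes_imp_bij[OF \<pi>], symmetric])
    also have "\<dots> = (\<Sum>b<r. J $$ (\<pi> a, \<pi> b) * K $$ (b, c))"
      using r Y_row c by (intro sum.mono_neutral_cong_right) auto
    also have "\<dots> = (?B * K) $$ (a, c)"
      using K a c by (simp add: permuted_block_def scalar_prod_def lessThan_atLeast0)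
    finally have "(J * Y) $$ (\<pi> a, c) = (?B * K) $$ (a, c)" .
    moreover have "(Y * M) $$ (\<pi> a, c) = (K * M) $$ (a, c)"
      using Y M K a c r \<pi>_lt Y_row by (simp add: scalar_prod_def)
    ultimately show "(?B * K) $$ (a, c) = (K * M) $$ (a, c)" using JY by simp
  qed (use K M in \<open>auto simp: permuted_block_def\<close>)
  obtain K' where K': "K' \<in> carrier_mat r r" "K * K' = 1\<^sub>m r" "K' * K = 1\<^sub>m r"
    using obtain_inverse_mat[OF K] by metis
  have B: "?B \<in> carrier_mat r r" by (simp add: permuted_block_def)
  have "M = K' * (K * M)" using K' K M by (simp add: assoc_mult_mat[of K' r r K r M r, symmetric])
  also have "\<dots> = K' * ?B * K" using K' K B by (simp add: BK assoc_mult_mat[of K' r r ?B r K r])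
  finally show ?thesis using K K' M B by (intro similar_matI[of _ _ _ _ r]) auto
qed

theorem proposition3:
  fixes n r :: nat and A :: "real mat" and \<Psi> :: "complex mat"
    and n_as :: "(nat \<times> complex) list" and \<pi> :: "nat \<Rightarrow> nat"
    and K :: "complex mat" and U :: "real mat"
  assumes A: "A \<in> carrier_mat n n"
    and r: "1 \<le> r" "r < n"
    and J: "jordan_basis n A \<Psi> n_as"
    and ord: "\<forall>i. i + 1 < n \<longrightarrow> Re (jordan_eig n_as (i + 1)) \<le> Re (jordan_eig n_as i)"
    and gap: "Re (jordan_eig n_as r) < Re (jordan_eig n_as (r - 1))"
    and perm: "\<pi> permutes {..<n}"
    and K: "K \<in> carrier_mat r r" "invertible_mat K"
    and U_def: "map_mat complex_of_real U = \<Psi> * map_mat complex_of_real (perm_mat n \<pi>) * stack_zero n K"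
    and St: "U \<in> stiefel r n"
    and eq: "oja_equilibrium A U"
  shows "char_poly (map_mat complex_of_real (transpose_mat U * A * U))
           = (\<Prod>i<r. [:- jordan_eig n_as (\<pi> i), 1:])"
proof -
  define M where "M = transpose_mat U * A * U"
  define Y where "Y = map_mat complex_of_real (perm_mat n \<pi>) * stack_zero n K"
  let ?J = "jordan_matrix n_as"
  have U: "U \<in> carrier_mat n r" using St unfolding stiefel_def by auto
  have M: "M \<in> carrier_mat r r" using U A unfolding M_def by auto
  have Y: "Y \<in> carrier_mat n r" using K unfolding Y_def perm_mat_def stack_zero_def by auto
  have \<Psi>: "\<Psi> \<in> carrier_mat n n" "invertible_mat \<Psi>"
    and A\<Psi>: "map_mat complex_of_real A * \<Psi> = \<Psi> * ?J" and J_dim: "sum_list (map fst n_as) = n"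
    using J unfolding jordan_basis_def by auto
  have J_carrier: "?J \<in> carrier_mat n n" using jordan_matrix_carrier[of n_as] J_dim by simp
  have U_Y: "map_mat complex_of_real U = \<Psi> * Y"
    using U_def \<Psi>(1) K(1) unfolding Y_def by (simp add: assoc_mult_mat[of \<Psi> n n _ n _ r] perm_mat_def stack_zero_def)
  have "map_mat complex_of_real A * (\<Psi> * Y) = (\<Psi> * Y) * map_mat complex_of_real M"
    using oja_equilibrium_imp_invariant[OF A U eq] unfolding M_def[symmetric] U_Y[symmetric]
    by (simp add: of_real_hom.mat_hom_mult[OF A U, symmetric] of_real_hom.mat_hom_mult[OF U M, symmetric])
  hence "?J * Y = Y * map_mat complex_of_real M"
    using intertwining_conj[OF \<Psi> _ J_carrier A\<Psi> Y] A M by simp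
  hence "similar_mat (map_mat complex_of_real M) (permuted_block ?J \<pi> r)"
    using perm_stack_zero_intertwining_imp_similar[OF J_carrier _ K perm] M r unfolding Y_def by simp
  hence "char_poly (map_mat complex_of_real M) = char_poly (permuted_block ?J \<pi> r)"
    by (rule char_poly_similar)
  also have "\<dots> = (\<Prod>i<r. [:- ?J $$ (\<pi> i, \<pi> i), 1:])"
  proof (rule char_poly_permuted_block_upper_triangular[OF J_carrier])
    show "upper_triangular ?J" by (intro upper_triangularI jordan_matrix_upper_triangular) simp
    show "inj_on \<pi> {..<r}" using permutes_inj_on[OF perm] r by (auto intro: inj_on_subset)
    show "\<pi> ` {..<r} \<subseteq> {..<n}" using permutes_image[OF perm] r by auto
  qed
  finally show ?thesis unfolding M_def jordan_eig_def .
qed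

end
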